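(* Let $A$ be a general metric space and $M$ a left module on $A$. Then for every $x\in A$, $$M(x)\ \le\ \sup_{\epsilon>0}\ \inf\{A(x,y): y\in A,\ M(y)\le\epsilon\}.$$ If moreover $M$ is $\mathcal P_1$-flat, this is an equality for every $x$, i.e. $M=M^-(\mathcal F(M))$.
   Context: $[0,\infty]$ with $+$ ($x+\infty=\infty$), internal hom $[x,y]=\max(y-x,0)$ for finite $x,y$, $[x,\infty]=\infty$ for $x<\infty$, $[\infty,y]=0$; $\inf\emptyset=\infty$, $\sup\emptyset=0$. A general metric space $A$ is a set with $A(-,-):A\times A\to[0,\infty]$, $A(x,x)=0$, $A(x,z)\le A(x,y)+A(y,z)$. A left module is $M:A\to[0,\infty]$ with $M(x)\le M(y)+A(x,y)$; a right module is $N:A\to[0,\infty]$ with $N(y)\le A(x,y)+N(x)$. A left module $M$ is $\mathcal P_1$-flat iff $\inf_xM(x)=0$ and for every $v\in[0,\infty]$ and every right module $N$, $\inf_x(M(x)+[v,N(x)])=[v,\inf_x(M(x)+N(x))]$. $\mathcal F(M)$ is the set of subsets of $A$ containing some $\{y:M(y)\le\epsilon\}$, $\epsilon>0$, and for a filter $\mathcal F$, $M^-(\mathcal F)(x)=\sup_{f\in\mathcal F}\inf_{y\in f}A(x,y)$. *)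

theory Defs
  imports "HOL-Library.Extended_Nonnegative_Real"
begin

text \<open>The quantale [0,\<infinity>] is modelled by ennreal; Inf {} = \<infinity>, Sup {} = 0 hold there.\<close>

definition ihom :: "ennreal \<Rightarrow> ennreal \<Rightarrow> ennreal" where
  "ihom x y = (if x = \<infinity> then 0 else if y = \<infinity> then \<infinity> else y - x)"

definition gen_metric :: "('a \<Rightarrow> 'a \<Rightarrow> ennreal) \<Rightarrow> bool" where
  "gen_metric A \<longleftrightarrow> (\<forall>x. A x x = 0) \<and> (\<forall>x y z. A x z \<le> A x y + A y z)"

definition left_module :: "('a \<Rightarrow> 'a \<Rightarrow> ennreal) \<Rightarrow> ('a \<Rightarrow> ennreal) \<Rightarrow> bool" where
  "left_module A M \<longleftrightarrow> (\<forall>x y. M x \<le> M y + A x y)"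

definition right_module :: "('a \<Rightarrow> 'a \<Rightarrow> ennreal) \<Rightarrow> ('a \<Rightarrow> ennreal) \<Rightarrow> bool" where
  "right_module A N \<longleftrightarrow> (\<forall>x y. N y \<le> A x y + N x)"

definition P1_flat :: "('a \<Rightarrow> 'a \<Rightarrow> ennreal) \<Rightarrow> ('a \<Rightarrow> ennreal) \<Rightarrow> bool" where
  "P1_flat A M \<longleftrightarrow> (INF x. M x) = 0 \<and>
     (\<forall>v N. right_module A N \<longrightarrow>
        (INF x. M x + ihom v (N x)) = ihom v (INF x. M x + N x))"

definition filter_of :: "('a \<Rightarrow> ennreal) \<Rightarrow> 'a set set" where
  "filter_of M = {S. \<exists>\<epsilon>>0. {y. M y \<le> \<epsilon>} \<subseteq> S}"

definition Mminus :: "('a \<Rightarrow> 'a \<Rightarrow> ennreal) \<Rightarrow> 'a set set \<Rightarrow> 'a \<Rightarrow> ennreal" where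
  "Mminus A F x = (SUP f\<in>F. INF y\<in>f. A x y)"

end

theory Submission
  imports Defs
begin

text \<open>
  The inequality holds for any left module: if \<open>M y \<le> \<epsilon>\<close> then \<open>M x \<le> \<epsilon> + A(x,y)\<close>,
  so \<open>M x \<le> \<epsilon> + inf {A(x,y) | M y \<le> \<epsilon>}\<close>, and \<open>\<epsilon> \<rightarrow> 0\<close>.
  For the converse, \<open>A(x,-)\<close> is a right module with \<open>inf\<^sub>y (M y + A(x,y)) = M x\<close>.
  Flatness applied to it and any finite \<open>t > M x\<close> gives \<open>inf\<^sub>y (M y + [t, A(x,y)]) = [t, M x] = 0\<close>,
  i.e. there are points \<open>y\<close> with \<open>M y\<close> arbitrarily small and \<open>A(x,y)\<close> arbitrarily
  close to at most \<open>t\<close>.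
\<close>

lemma left_module_le_add_INF_sublevel:
  assumes "left_module A M"
  shows "M x \<le> e + (INF y\<in>{y. M y \<le> e}. A x y)"
proof (cases "e = \<infinity>")
  case False
  have "M x - e \<le> A x y" if "M y \<le> e" for y
  proof -
    have "M x \<le> M y + A x y" using assms unfolding left_module_def by blast
    also have "\<dots> \<le> e + A x y" using that by (rule add_right_mono)
    finally show ?thesis using False by (simp add: ennreal_minus_le_iff)
  qed
  then have "M x - e \<le> (INF y\<in>{y. M y \<le> e}. A x y)"
    by (auto intro: INF_greatest)
  then show ?thesis using False by (simp add: ennreal_minus_le_iff)
qed simp

lemma left_module_le_SUP_INF_sublevel:
  assumes "left_module A M"
  shows "M x \<le> (SUP \<epsilon>\<in>{0<..}. INF y\<in>{y. M y \<le> \<epsilon>}. A x y)"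
proof (rule ennreal_le_epsilon)
  fix r :: real
  assume "0 < r"
  have "M x \<le> ennreal r + (INF y\<in>{y. M y \<le> ennreal r}. A x y)"
    using assms by (rule left_module_le_add_INF_sublevel)
  also have "\<dots> \<le> ennreal r + (SUP \<epsilon>\<in>{0<..}. INF y\<in>{y. M y \<le> \<epsilon>}. A x y)"
    using \<open>0 < r\<close> by (intro add_left_mono SUP_upper) simp
  finally show "M x \<le> (SUP \<epsilon>\<in>{0<..}. INF y\<in>{y. M y \<le> \<epsilon>}. A x y) + ennreal r"
    by (simp add: add.commute)
qed

lemma Mminus_filter_of:
  "Mminus A (filter_of M) x = (SUP \<epsilon>\<in>{0<..}. INF y\<in>{y. M y \<le> \<epsilon>}. A x y)"
proof (rule antisym)
  show "Mminus A (filter_of M) x \<le> (SUP \<epsilon>\<in>{0<..}. INF y\<in>{y. M y \<le> \<epsilon>}. A x y)"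
    unfolding Mminus_def
  proof (rule SUP_least)
    fix f
    assume "f \<in> filter_of M"
    then obtain \<epsilon> where "\<epsilon> > 0" "{y. M y \<le> \<epsilon>} \<subseteq> f"
      unfolding filter_of_def by blast
    then have "(INF y\<in>f. A x y) \<le> (INF y\<in>{y. M y \<le> \<epsilon>}. A x y)"
      by (intro INF_superset_mono) auto
    also have "\<dots> \<le> (SUP \<epsilon>\<in>{0<..}. INF y\<in>{y. M y \<le> \<epsilon>}. A x y)"
      using \<open>\<epsilon> > 0\<close> by (intro SUP_upper) simp
    finally show "(INF y\<in>f. A x y) \<le> \<dots>" .
  qed
  show "(SUP \<epsilon>\<in>{0<..}. INF y\<in>{y. M y \<le> \<epsilon>}. A x y) \<le> Mminus A (filter_of M) x"
    unfolding Mminus_def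
    by (rule SUP_mono) (auto simp: filter_of_def)
qed

lemma right_module_dist:
  assumes "gen_metric A"
  shows "right_module A (A x)"
  using assms unfolding gen_metric_def right_module_def by (metis add.commute)

lemma left_module_INF_add_dist:
  assumes "gen_metric A" and "left_module A M"
  shows "(INF y. M y + A x y) = M x"
proof (rule antisym)
  show "(INF y. M y + A x y) \<le> M x"
    using INF_lower[of x UNIV "\<lambda>y. M y + A x y"] assms(1) by (simp add: gen_metric_def)
  show "M x \<le> (INF y. M y + A x y)"
    using assms(2) by (auto simp: left_module_def intro: INF_greatest)
qed

lemma ihom_eq_0_iff: "ihom t a = 0 \<longleftrightarrow> t = \<infinity> \<or> a \<le> t"
  by (auto simp: ihom_def diff_eq_0_iff_ennreal top_unique less_top)

lemma ihom_less_imp_le_add: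
  assumes "ihom t a < r"
  shows "a \<le> t + r"
proof (cases "t = \<infinity>")
  case False
  with assms have "a - t < r" by (auto simp: ihom_def split: if_splits)
  then show ?thesis using ennreal_minus_le_iff[of a t r] False by (simp add: less_imp_le)
qed simp

lemma P1_flat_INF_sublevel_le:
  assumes flat: "P1_flat A M" and N: "right_module A N" and "\<epsilon> > 0"
  shows "(INF y\<in>{y. M y \<le> \<epsilon>}. N y) \<le> (INF y. M y + N y)"
proof (rule dense_ge)
  fix t
  assume t: "(INF y. M y + N y) < t"
  show "(INF y\<in>{y. M y \<le> \<epsilon>}. N y) \<le> t"
  proof (cases "t = \<infinity>")
    case False
    have vanish: "(INF y. M y + ihom t (N y)) = 0"
      using flat N t False by (simp add: P1_flat_def ihom_eq_0_iff less_imp_le)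
    show ?thesis
    proof (rule ennreal_le_epsilon)
      fix r :: real
      assume "0 < r"
      then have "0 < min \<epsilon> (ennreal r)" using \<open>\<epsilon> > 0\<close> by simp
      then obtain y where "M y + ihom t (N y) < min \<epsilon> (ennreal r)"
        using INF_less_iff[THEN iffD1, of "\<lambda>y. M y + ihom t (N y)" UNIV "min \<epsilon> (ennreal r)"]
          vanish \<open>0 < min \<epsilon> (ennreal r)\<close> by auto
      then have sum_eps: "M y + ihom t (N y) < \<epsilon>" and sum_r: "M y + ihom t (N y) < ennreal r"
        by simp_all
      have "M y < \<epsilon>" by (rule order.strict_trans1[OF _ sum_eps]) simp
      moreover have "ihom t (N y) < ennreal r" by (rule order.strict_trans1[OF _ sum_r]) simp
      ultimately have "M y \<le> \<epsilon>" and "N y \<le> t + ennreal r"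
        by (auto intro: ihom_less_imp_le_add)
      then show "(INF y\<in>{y. M y \<le> \<epsilon>}. N y) \<le> t + ennreal r"
        by (intro INF_lower2[of y]) simp_all
    qed
  qed simp
qed

lemma P1_flat_SUP_INF_sublevel_le:
  assumes "gen_metric A" and "left_module A M" and "P1_flat A M"
  shows "(SUP \<epsilon>\<in>{0<..}. INF y\<in>{y. M y \<le> \<epsilon>}. A x y) \<le> M x"
proof (rule SUP_least)
  fix \<epsilon> :: ennreal
  assume "\<epsilon> \<in> {0<..}"
  then have "(INF y\<in>{y. M y \<le> \<epsilon>}. A x y) \<le> (INF y. M y + A x y)"
    using assms(3) right_module_dist[OF assms(1)] by (intro P1_flat_INF_sublevel_le) auto
  then show "(INF y\<in>{y. M y \<le> \<epsilon>}. A x y) \<le> M x"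
    using left_module_INF_add_dist[OF assms(1,2)] by simp
qed

theorem mainTheorem11:
  fixes A :: "'a \<Rightarrow> 'a \<Rightarrow> ennreal" and M :: "'a \<Rightarrow> ennreal"
  assumes "gen_metric A" and "left_module A M"
  shows "(\<forall>x. M x \<le> (SUP \<epsilon>\<in>{0<..}. INF y\<in>{y. M y \<le> \<epsilon>}. A x y))
       \<and> (P1_flat A M \<longrightarrow>
            (\<forall>x. M x = (SUP \<epsilon>\<in>{0<..}. INF y\<in>{y. M y \<le> \<epsilon>}. A x y))
            \<and> M = Mminus A (filter_of M))"
proof (intro conjI allI impI)
  show le: "M x \<le> (SUP \<epsilon>\<in>{0<..}. INF y\<in>{y. M y \<le> \<epsilon>}. A x y)" for x
    using assms(2) by (rule left_module_le_SUP_INF_sublevel)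
  assume "P1_flat A M"
  show eq: "M x = (SUP \<epsilon>\<in>{0<..}. INF y\<in>{y. M y \<le> \<epsilon>}. A x y)" for x
    using le[of x] P1_flat_SUP_INF_sublevel_le[OF assms \<open>P1_flat A M\<close>, of x] by (rule antisym)
  show "M = Mminus A (filter_of M)"
    by (rule ext) (simp only: Mminus_filter_of eq[symmetric])
qed

end
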